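(* Let $\mathcal{X},\mathcal{Y}$ be stationary finite Markov chains and $C:{\bm X}\times{\bm Y}\to\mathbb{R}_+$ a cost function. Then $$d_{\mathrm{OTC}}(\mathcal{X},\mathcal{Y};C)=\lim_{\delta\to0}d^{\delta,(\infty)}_{\mathrm{WL}}(\mathcal{X},\mathcal{Y};C),\quad\text{and hence}\quad d_{\mathrm{OTC}}(\mathcal{X},\mathcal{Y};C)=\lim_{\delta\to0}\lim_{k\to\infty}d^{\delta,(k)}_{\mathrm{WL}}(\mathcal{X},\mathcal{Y};C).$$
   Context: A finite Markov chain $\mathcal{X}=({\bm X},m^{\bm X}_\bullet,\nu^{\bm X})$ consists of a finite set ${\bm X}$, a transition kernel $m^{\bm X}_\bullet:{\bm X}\to\mathcal{P}({\bm X})$ and an initial distribution $\nu^{\bm X}$; it is stationary if $\nu^{\bm X}$ is stationary for $m^{\bm X}_\bullet$. $\mathcal{C}(\alpha,\beta)$ denotes the set of couplings. A Markovian coupling between $\mathcal{X}$ and $\mathcal{Y}$ is a (possibly time-inhomogeneous) Markov chain $(X_t,Y_t)_{t\in\mathbb{N}}$ on ${\bm X}\times{\bm Y}$ with $\mathrm{law}(X_0,Y_0)\in\mathcal{C}(\nu^{\bm X},\nu^{\bm Y})$ and, for all $t,x,y$, the conditional law of $(X_{t+1},Y_{t+1})$ given $(X_t,Y_t)=(x,y)$ in $\mathcal{C}(m^{\bm X}_x,m^{\bm Y}_y)$; it is time homogeneous if these laws do not depend on $t$. $\Pi(\mathcal{X},\mathcal{Y})$ is the set of Markovian couplings. $d_{\mathrm{OTC}}(\mathcal{X},\mathcal{Y};C)=\inf\mathbb{E}\,C(X_0,Y_0)$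 over time homogeneous Markovian couplings whose initial distribution is stationary for the coupled chain. For $\delta\in(0,1]$: $d^{\delta,(k)}_{\mathrm{WL}}(\mathcal{X},\mathcal{Y};C)=\inf_{\Pi(\mathcal{X},\mathcal{Y})}\mathbb{E}\big[\sum_{t=0}^{k-1}\delta(1-\delta)^tC(X_t,Y_t)+(1-\delta)^kC(X_k,Y_k)\big]$ for $k\in\mathbb{N}$ and $d^{\delta,(\infty)}_{\mathrm{WL}}(\mathcal{X},\mathcal{Y};C)=\inf_{\Pi(\mathcal{X},\mathcal{Y})}\mathbb{E}\big[\sum_{t=0}^{\infty}\delta(1-\delta)^tC(X_t,Y_t)\big]$. *)

theory Defs
  imports "HOL-Probability.Probability"
begin

text \<open>A finite Markov chain on a finite type 'a is given by a transition kernel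
  m :: 'a \<Rightarrow> 'a pmf and an initial distribution \<nu> :: 'a pmf.\<close>

definition stationary :: "('a \<Rightarrow> 'a pmf) \<Rightarrow> 'a pmf \<Rightarrow> bool" where
  "stationary m \<nu> \<longleftrightarrow> bind_pmf \<nu> m = \<nu>"

definition couplings :: "'a pmf \<Rightarrow> 'b pmf \<Rightarrow> ('a \<times> 'b) pmf set" where
  "couplings \<alpha> \<beta> = {\<pi>. map_pmf fst \<pi> = \<alpha> \<and> map_pmf snd \<pi> = \<beta>}"

definition markov_couplings ::
  "('a \<Rightarrow> 'a pmf) \<Rightarrow> 'a pmf \<Rightarrow> ('b \<Rightarrow> 'b pmf) \<Rightarrow> 'b pmf
   \<Rightarrow> (('a \<times> 'b) pmf \<times> (nat \<Rightarrow> 'a \<times> 'b \<Rightarrow> ('a \<times> 'b) pmf)) set" where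
  "markov_couplings mX \<nu>X mY \<nu>Y =
     {(\<pi>0, K). \<pi>0 \<in> couplings \<nu>X \<nu>Y \<and>
        (\<forall>t x y. K t (x, y) \<in> couplings (mX x) (mY y))}"

text \<open>Law of (X_t, Y_t).\<close>
primrec coupled_law ::
  "('a \<times> 'b) pmf \<Rightarrow> (nat \<Rightarrow> 'a \<times> 'b \<Rightarrow> ('a \<times> 'b) pmf) \<Rightarrow> nat \<Rightarrow> ('a \<times> 'b) pmf" where
  "coupled_law \<pi>0 K 0 = \<pi>0"
| "coupled_law \<pi>0 K (Suc t) = bind_pmf (coupled_law \<pi>0 K t) (K t)"

definition exp_cost :: "('a \<Rightarrow> 'b \<Rightarrow> real) \<Rightarrow> ('a \<times> 'b) pmf \<Rightarrow> real" where
  "exp_cost C p = measure_pmf.expectation p (\<lambda>(x, y). C x y)"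

definition d_OTC ::
  "('a \<Rightarrow> 'a pmf) \<Rightarrow> 'a pmf \<Rightarrow> ('b \<Rightarrow> 'b pmf) \<Rightarrow> 'b pmf \<Rightarrow> ('a \<Rightarrow> 'b \<Rightarrow> real) \<Rightarrow> real" where
  "d_OTC mX \<nu>X mY \<nu>Y C =
     Inf {exp_cost C \<pi>0 | \<pi>0 K.
            \<pi>0 \<in> couplings \<nu>X \<nu>Y \<and>
            (\<forall>x y. K (x, y) \<in> couplings (mX x) (mY y)) \<and>
            bind_pmf \<pi>0 K = \<pi>0}"

definition d_WL_k ::
  "real \<Rightarrow> nat \<Rightarrow> ('a \<Rightarrow> 'a pmf) \<Rightarrow> 'a pmf \<Rightarrow> ('b \<Rightarrow> 'b pmf) \<Rightarrow> 'b pmf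
   \<Rightarrow> ('a \<Rightarrow> 'b \<Rightarrow> real) \<Rightarrow> real" where
  "d_WL_k \<delta> k mX \<nu>X mY \<nu>Y C =
     Inf {(\<Sum>t<k. \<delta> * (1 - \<delta>) ^ t * exp_cost C (coupled_law \<pi>0 K t))
            + (1 - \<delta>) ^ k * exp_cost C (coupled_law \<pi>0 K k) | \<pi>0 K.
          (\<pi>0, K) \<in> markov_couplings mX \<nu>X mY \<nu>Y}"

definition d_WL_inf ::
  "real \<Rightarrow> ('a \<Rightarrow> 'a pmf) \<Rightarrow> 'a pmf \<Rightarrow> ('b \<Rightarrow> 'b pmf) \<Rightarrow> 'b pmf
   \<Rightarrow> ('a \<Rightarrow> 'b \<Rightarrow> real) \<Rightarrow> real" where
  "d_WL_inf \<delta> mX \<nu>X mY \<nu>Y C =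
     Inf {(\<Sum>t. \<delta> * (1 - \<delta>) ^ t * exp_cost C (coupled_law \<pi>0 K t)) | \<pi>0 K.
          (\<pi>0, K) \<in> markov_couplings mX \<nu>X mY \<nu>Y}"

end

(* For a Markovian coupling (pi0, K) and a discount delta, let mu(z) = sum_t delta (1 - delta)^t P(Z_t = z)
   be the discounted occupation measure and G(z, w) = sum_t delta (1 - delta)^t P(Z_t = z) K_t(z)(w) the
   discounted measure of transitions. The discounted WL cost is the mu-average of C; mu couples the two
   stationary laws because every Z_t does; row z of G is mu(z) times a coupling of the two transition
   kernels; and shifting time by one step shows that inflow and outflow of G differ by at most delta at
   every state. These conditions are linear in G and G lies in a bounded set, so as delta -> 0 a
   subsequence converges to a balanced G, whose normalised rows form a stationary time-homogeneous
   coupling with cost at most the limit of the WL costs. Conversely a stationary coupling is a Markovian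
   coupling with constant law, so d_WL^delta <= d_OTC. Finally the k-step objective differs from the
   infinite one by at most (1 - delta)^k sum C, uniformly in the coupling. *)

theory Submission
  imports Defs
begin

lemma pmf_map_finite:
  fixes p :: "'a::finite pmf"
  shows "pmf (map_pmf f p) x = (\<Sum>z\<in>f -` {x}. pmf p z)"
  by (simp add: pmf_map measure_measure_pmf_finite)

lemma expectation_finite:
  fixes p :: "'a::finite pmf" and g :: "'a \<Rightarrow> real"
  shows "measure_pmf.expectation p g = (\<Sum>z\<in>UNIV. pmf p z * g z)"
  by (subst integral_measure_pmf[of UNIV]) auto

lemma pmf_bind_finite:
  fixes p :: "'a::finite pmf"
  shows "pmf (bind_pmf p f) x = (\<Sum>z\<in>UNIV. pmf p z * pmf (f z) x)"
  by (simp add: pmf_bind expectation_finite)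

lemma bind_pmf_eq_of_balance:
  fixes \<pi> :: "'a::finite pmf"
  assumes "\<And>z w. pmf \<pi> z * pmf (K z) w = G z w" and "\<And>w. (\<Sum>z\<in>UNIV. G z w) = pmf \<pi> w"
  shows "bind_pmf \<pi> K = \<pi>"
  by (rule pmf_eqI) (simp add: pmf_bind_finite assms)

lemma pmf_embed_pmf_finite:
  fixes f :: "'a::finite \<Rightarrow> real"
  assumes "\<And>x. 0 \<le> f x" and "(\<Sum>x\<in>UNIV. f x) = 1"
  shows "pmf (embed_pmf f) x = f x"
proof (rule pmf_embed_pmf)
  show "(\<integral>\<^sup>+x. ennreal (f x) \<partial>count_space UNIV) = 1"
    using assms by (simp add: nn_integral_count_space_finite sum_ennreal)
qed (use assms in auto)

lemma bind_pair_pmf_product: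
  "bind_pmf (pair_pmf A B) (\<lambda>z. pair_pmf (f (fst z)) (g (snd z))) = pair_pmf (bind_pmf A f) (bind_pmf B g)"
  unfolding pair_pmf_def bind_assoc_pmf bind_return_pmf
  by (simp add: bind_commute_pmf[of B])

lemma exp_cost_finite:
  fixes p :: "('a::finite \<times> 'b::finite) pmf"
  shows "exp_cost C p = (\<Sum>z\<in>UNIV. pmf p z * C (fst z) (snd z))"
  unfolding exp_cost_def expectation_finite by (simp add: case_prod_beta)

lemma exp_cost_nonneg:
  fixes p :: "('a::finite \<times> 'b::finite) pmf"
  assumes "\<And>x y. 0 \<le> C x y"
  shows "0 \<le> exp_cost C p"
  unfolding exp_cost_finite using assms by (simp add: sum_nonneg)

lemma exp_cost_le_sum:
  fixes p :: "('a::finite \<times> 'b::finite) pmf"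
  assumes "\<And>x y. 0 \<le> C x y"
  shows "exp_cost C p \<le> (\<Sum>z\<in>UNIV. C (fst z) (snd z))"
proof -
  have "exp_cost C p \<le> (\<Sum>z\<in>UNIV. pmf p z * (\<Sum>z\<in>UNIV. C (fst z) (snd z)))"
    unfolding exp_cost_finite
    by (intro sum_mono mult_left_mono member_le_sum) (auto simp: assms)
  also have "\<dots> = (\<Sum>z\<in>UNIV. C (fst z) (snd z))"
    by (simp add: sum_distrib_right[symmetric] sum_pmf_eq_1)
  finally show ?thesis .
qed

lemma cInf_image_le_plus:
  fixes f g :: "'a \<Rightarrow> real"
  assumes "A \<noteq> {}" and "bdd_below (f ` A)" and "\<And>p. p \<in> A \<Longrightarrow> f p \<le> g p + e"
  shows "Inf (f ` A) \<le> Inf (g ` A) + e"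
proof -
  have "Inf (f ` A) - e \<le> Inf (g ` A)"
  proof (rule cInf_greatest)
    fix v
    assume "v \<in> g ` A"
    then obtain p where "p \<in> A" "v = g p"
      by auto
    with assms(2,3) show "Inf (f ` A) - e \<le> v"
      using cInf_lower[of "f p" "f ` A"] by fastforce
  qed (use assms(1) in auto)
  then show ?thesis
    by simp
qed

lemma bounded_functions_convergent_subseq:
  fixes f :: "nat \<Rightarrow> 'a::finite \<Rightarrow> real"
  assumes "\<And>n x. \<bar>f n x\<bar> \<le> B"
  obtains r g where "strict_mono r" and "\<And>x. (\<lambda>n. f (r n) x) \<longlonglongrightarrow> g x"
proof -
  have "\<exists>g r. strict_mono r \<and> (\<forall>\<epsilon>>0. \<forall>\<^sub>F n in sequentially. \<forall>x\<in>UNIV. dist (f (r n) x) (g x) < \<epsilon>)"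
    by (rule compact_lemma_general[where proj = "\<lambda>h x. h x" and unproj = id and basis = UNIV, rule_format])
      (use assms in \<open>auto simp: bounded_iff\<close>)
  then obtain g r where r: "strict_mono r"
    and conv: "\<And>\<epsilon>. 0 < \<epsilon> \<Longrightarrow> \<forall>\<^sub>F n in sequentially. \<forall>x. dist (f (r n) x) (g x) < \<epsilon>"
    by auto
  show ?thesis
  proof (rule that[OF r])
    show "(\<lambda>n. f (r n) x) \<longlonglongrightarrow> g x" for x
    proof (rule tendstoI)
      fix \<epsilon> :: real
      assume "0 < \<epsilon>"
      from conv[OF this] show "\<forall>\<^sub>F n in sequentially. dist (f (r n) x) (g x) < \<epsilon>"
        by (rule eventually_mono) blast
    qed
  qed
qed

section \<open>Geometric discounting\<close>

definition discounted :: "real \<Rightarrow> (nat \<Rightarrow> real) \<Rightarrow> real" where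
  "discounted \<delta> a = (\<Sum>t. \<delta> * (1 - \<delta>) ^ t * a t)"

context
  fixes \<delta> :: real
  assumes \<delta>_pos: "0 < \<delta>" and \<delta>_le_1: "\<delta> \<le> 1"
begin

lemma discount_weights_sums: "(\<lambda>t. \<delta> * (1 - \<delta>) ^ t) sums 1"
proof -
  have "(\<lambda>t. (1 - \<delta>) ^ t) sums (1 / (1 - (1 - \<delta>)))"
    by (rule geometric_sums) (use \<delta>_pos \<delta>_le_1 in auto)
  from sums_mult[OF this, of \<delta>] show ?thesis
    using \<delta>_pos by simp
qed

lemma summable_discounted:
  assumes "\<And>t. \<bar>a t\<bar> \<le> B"
  shows "summable (\<lambda>t. \<delta> * (1 - \<delta>) ^ t * a t)"
proof (rule summable_comparison_test)
  show "summable (\<lambda>t. \<delta> * (1 - \<delta>) ^ t * B)"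
    using sums_summable[OF sums_mult2[OF discount_weights_sums]] .
  show "\<exists>N. \<forall>t\<ge>N. norm (\<delta> * (1 - \<delta>) ^ t * a t) \<le> \<delta> * (1 - \<delta>) ^ t * B"
    using assms \<delta>_pos \<delta>_le_1 by (auto simp: abs_mult intro!: mult_left_mono)
qed

lemma discounted_const [simp]: "discounted \<delta> (\<lambda>_. c) = c"
  unfolding discounted_def using sums_unique[OF sums_mult2[OF discount_weights_sums, of c]] by simp

lemma discounted_mono:
  assumes "\<And>t. a t \<le> b t" and "\<And>t. \<bar>a t\<bar> \<le> B" and "\<And>t. \<bar>b t\<bar> \<le> B"
  shows "discounted \<delta> a \<le> discounted \<delta> b"
  unfolding discounted_def
  using assms \<delta>_pos \<delta>_le_1
  by (intro suminf_le summable_discounted mult_left_mono) auto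

lemma discounted_bounds:
  assumes "\<And>t. 0 \<le> a t" and "\<And>t. a t \<le> B"
  shows "0 \<le> discounted \<delta> a" and "discounted \<delta> a \<le> B"
proof -
  have "\<bar>a t\<bar> \<le> B" "0 \<le> B" for t
    using assms[of t] by auto
  then show "0 \<le> discounted \<delta> a" "discounted \<delta> a \<le> B"
    using discounted_mono[of "\<lambda>_. 0" a B] discounted_mono[of a "\<lambda>_. B" B] assms by auto
qed

lemma discounted_sum:
  assumes "\<And>i t. i \<in> I \<Longrightarrow> \<bar>f i t\<bar> \<le> B"
  shows "discounted \<delta> (\<lambda>t. \<Sum>i\<in>I. f i t) = (\<Sum>i\<in>I. discounted \<delta> (f i))"
  unfolding discounted_def sum_distrib_left
  by (rule suminf_sum) (use assms summable_discounted in blast)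

lemma discounted_mult_right:
  assumes "\<And>t. \<bar>a t\<bar> \<le> B"
  shows "discounted \<delta> (\<lambda>t. a t * c) = discounted \<delta> a * c"
  unfolding discounted_def using suminf_mult2[OF summable_discounted[OF assms], where c = c]
  by (simp add: mult.assoc)

lemma discounted_split:
  assumes "\<And>t. \<bar>a t\<bar> \<le> B"
  shows "discounted \<delta> a = (\<Sum>t<k. \<delta> * (1 - \<delta>) ^ t * a t) + (1 - \<delta>) ^ k * discounted \<delta> (\<lambda>t. a (t + k))"
proof -
  have "discounted \<delta> a = (\<Sum>t. \<delta> * (1 - \<delta>) ^ (t + k) * a (t + k)) + (\<Sum>t<k. \<delta> * (1 - \<delta>) ^ t * a t)"
    unfolding discounted_def by (rule suminf_split_initial_segment[OF summable_discounted[OF assms]])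
  moreover have "(\<Sum>t. \<delta> * (1 - \<delta>) ^ (t + k) * a (t + k)) = (1 - \<delta>) ^ k * discounted \<delta> (\<lambda>t. a (t + k))"
    unfolding discounted_def using suminf_mult[OF summable_discounted[of "\<lambda>t. a (t + k)"], of B "(1 - \<delta>) ^ k"] assms
    by (simp add: power_add algebra_simps)
  ultimately show ?thesis by simp
qed

lemma truncated_discounted_error:
  assumes "\<And>t. 0 \<le> a t" and "\<And>t. a t \<le> B"
  shows "\<bar>(\<Sum>t<k. \<delta> * (1 - \<delta>) ^ t * a t) + (1 - \<delta>) ^ k * a k - discounted \<delta> a\<bar> \<le> (1 - \<delta>) ^ k * B"
proof -
  have "\<bar>a t\<bar> \<le> B" for t
    using assms[of t] by auto
  then have "(\<Sum>t<k. \<delta> * (1 - \<delta>) ^ t * a t) + (1 - \<delta>) ^ k * a k - discounted \<delta> a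
      = (1 - \<delta>) ^ k * (a k - discounted \<delta> (\<lambda>t. a (t + k)))"
    by (subst discounted_split[where k = k]) (auto simp: algebra_simps)
  moreover have "\<bar>a k - discounted \<delta> (\<lambda>t. a (t + k))\<bar> \<le> B"
  proof -
    have "0 \<le> discounted \<delta> (\<lambda>t. a (t + k))" "discounted \<delta> (\<lambda>t. a (t + k)) \<le> B"
      by (intro discounted_bounds[where B = B] assms)+
    with assms(1,2)[of k] show ?thesis
      unfolding abs_le_iff by linarith
  qed
  ultimately show ?thesis
    using \<delta>_le_1 by (simp add: abs_mult mult_left_mono)
qed

end

section \<open>Markovian and stationary couplings\<close>

lemma markov_couplings_kernel:
  assumes "(\<pi>0, K) \<in> markov_couplings mX \<nu>X mY \<nu>Y"
  shows "K t z \<in> couplings (mX (fst z)) (mY (snd z))"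
  using assms by (cases z) (simp add: markov_couplings_def)

lemma coupled_law_couplings:
  assumes "stationary mX \<nu>X" and "stationary mY \<nu>Y"
    and "(\<pi>0, K) \<in> markov_couplings mX \<nu>X mY \<nu>Y"
  shows "coupled_law \<pi>0 K t \<in> couplings \<nu>X \<nu>Y"
proof (induction t)
  case 0
  then show ?case using assms(3) by (simp add: markov_couplings_def)
next
  case (Suc t)
  have "map_pmf fst (K t z) = mX (fst z)" "map_pmf snd (K t z) = mY (snd z)" for z
    using markov_couplings_kernel[OF assms(3)] by (auto simp: couplings_def)
  then have "map_pmf fst (coupled_law \<pi>0 K (Suc t)) = bind_pmf (map_pmf fst (coupled_law \<pi>0 K t)) mX"
    and "map_pmf snd (coupled_law \<pi>0 K (Suc t)) = bind_pmf (map_pmf snd (coupled_law \<pi>0 K t)) mY"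
    by (simp_all add: map_bind_pmf bind_map_pmf)
  with Suc assms(1,2) show ?case
    by (simp add: couplings_def stationary_def)
qed

lemma coupled_law_const_stationary:
  assumes "bind_pmf \<pi>0 K = \<pi>0"
  shows "coupled_law \<pi>0 (\<lambda>_. K) t = \<pi>0"
  by (induction t) (simp_all add: assms)

lemma product_markov_coupling:
  "(pair_pmf \<nu>X \<nu>Y, \<lambda>t z. pair_pmf (mX (fst z)) (mY (snd z))) \<in> markov_couplings mX \<nu>X mY \<nu>Y"
  by (simp add: markov_couplings_def couplings_def map_fst_pair_pmf map_snd_pair_pmf)

definition stationary_couplings ::
  "('a \<Rightarrow> 'a pmf) \<Rightarrow> 'a pmf \<Rightarrow> ('b \<Rightarrow> 'b pmf) \<Rightarrow> 'b pmf
   \<Rightarrow> (('a \<times> 'b) pmf \<times> ('a \<times> 'b \<Rightarrow> ('a \<times> 'b) pmf)) set" where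
  "stationary_couplings mX \<nu>X mY \<nu>Y =
     {(\<pi>0, K). \<pi>0 \<in> couplings \<nu>X \<nu>Y \<and> (\<forall>x y. K (x, y) \<in> couplings (mX x) (mY y)) \<and>
        bind_pmf \<pi>0 K = \<pi>0}"

lemma product_stationary_coupling:
  assumes "stationary mX \<nu>X" and "stationary mY \<nu>Y"
  shows "(pair_pmf \<nu>X \<nu>Y, \<lambda>z. pair_pmf (mX (fst z)) (mY (snd z))) \<in> stationary_couplings mX \<nu>X mY \<nu>Y"
  using assms
  by (simp add: stationary_couplings_def couplings_def map_fst_pair_pmf map_snd_pair_pmf
      bind_pair_pmf_product stationary_def)

lemma d_OTC_eq_Inf_stationary_couplings:
  "d_OTC mX \<nu>X mY \<nu>Y C = Inf ((\<lambda>(\<pi>0, K). exp_cost C \<pi>0) ` stationary_couplings mX \<nu>X mY \<nu>Y)"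
  unfolding d_OTC_def stationary_couplings_def by (rule arg_cong[where f = Inf]) force

lemma d_WL_inf_eq_Inf:
  "d_WL_inf \<delta> mX \<nu>X mY \<nu>Y C =
     Inf ((\<lambda>(\<pi>0, K). discounted \<delta> (\<lambda>t. exp_cost C (coupled_law \<pi>0 K t))) ` markov_couplings mX \<nu>X mY \<nu>Y)"
  unfolding d_WL_inf_def discounted_def by (rule arg_cong[where f = Inf]) force

lemma d_WL_k_eq_Inf:
  "d_WL_k \<delta> k mX \<nu>X mY \<nu>Y C =
     Inf ((\<lambda>(\<pi>0, K). (\<Sum>t<k. \<delta> * (1 - \<delta>) ^ t * exp_cost C (coupled_law \<pi>0 K t))
            + (1 - \<delta>) ^ k * exp_cost C (coupled_law \<pi>0 K k)) ` markov_couplings mX \<nu>X mY \<nu>Y)"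
  unfolding d_WL_k_def by (rule arg_cong[where f = Inf]) force

section \<open>Discounted occupation measures\<close>

definition occupation ::
  "real \<Rightarrow> ('a \<times> 'b) pmf \<Rightarrow> (nat \<Rightarrow> 'a \<times> 'b \<Rightarrow> ('a \<times> 'b) pmf) \<Rightarrow> 'a \<times> 'b \<Rightarrow> real" where
  "occupation \<delta> \<pi>0 K z = discounted \<delta> (\<lambda>t. pmf (coupled_law \<pi>0 K t) z)"

definition edge_occupation ::
  "real \<Rightarrow> ('a \<times> 'b) pmf \<Rightarrow> (nat \<Rightarrow> 'a \<times> 'b \<Rightarrow> ('a \<times> 'b) pmf) \<Rightarrow> 'a \<times> 'b \<Rightarrow> 'a \<times> 'b \<Rightarrow> real" where
  "edge_occupation \<delta> \<pi>0 K z w = discounted \<delta> (\<lambda>t. pmf (coupled_law \<pi>0 K t) z * pmf (K t z) w)"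

context
  fixes \<delta> :: real and \<pi>0 :: "('a::finite \<times> 'b::finite) pmf" and K :: "nat \<Rightarrow> 'a \<times> 'b \<Rightarrow> ('a \<times> 'b) pmf"
  assumes \<delta>_pos: "0 < \<delta>" and \<delta>_le_1: "\<delta> \<le> 1"
begin

lemma edge_occupation_nonneg: "0 \<le> edge_occupation \<delta> \<pi>0 K z w"
  unfolding edge_occupation_def
  by (rule discounted_bounds(1)[OF \<delta>_pos \<delta>_le_1, where B = 1]) (auto intro: mult_le_one pmf_le_1)

lemma sum_edge_occupation:
  "(\<Sum>w\<in>A. edge_occupation \<delta> \<pi>0 K z w) =
     discounted \<delta> (\<lambda>t. pmf (coupled_law \<pi>0 K t) z * (\<Sum>w\<in>A. pmf (K t z) w))"
  unfolding edge_occupation_def sum_distrib_left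
  by (rule discounted_sum[OF \<delta>_pos \<delta>_le_1, where B = 1, symmetric]) (simp add: mult_le_one pmf_le_1)

lemma sum_edge_occupation_vimage:
  assumes "\<And>t. map_pmf f (K t z) = q"
  shows "(\<Sum>w\<in>f -` {a}. edge_occupation \<delta> \<pi>0 K z w) = pmf q a * occupation \<delta> \<pi>0 K z"
  unfolding sum_edge_occupation occupation_def pmf_map_finite[of f, symmetric] assms
  by (subst discounted_mult_right[OF \<delta>_pos \<delta>_le_1, where B = 1]) (simp_all add: pmf_le_1 mult.commute)

lemma sum_edge_occupation_UNIV: "(\<Sum>w\<in>UNIV. edge_occupation \<delta> \<pi>0 K z w) = occupation \<delta> \<pi>0 K z"
  unfolding sum_edge_occupation occupation_def by (simp add: sum_pmf_eq_1)

lemma sum_occupation_vimage: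
  assumes "\<And>t. map_pmf f (coupled_law \<pi>0 K t) = \<nu>"
  shows "(\<Sum>z\<in>f -` {a}. occupation \<delta> \<pi>0 K z) = pmf \<nu> a"
  unfolding occupation_def
  by (subst discounted_sum[OF \<delta>_pos \<delta>_le_1, where B = 1, symmetric])
    (simp_all add: pmf_le_1 pmf_map_finite[of f, symmetric] assms \<delta>_pos \<delta>_le_1)

lemma edge_occupation_inflow:
  "\<bar>(\<Sum>z\<in>UNIV. edge_occupation \<delta> \<pi>0 K z w) - occupation \<delta> \<pi>0 K w\<bar> \<le> \<delta>"
proof -
  define inflow where "inflow = discounted \<delta> (\<lambda>t. pmf (coupled_law \<pi>0 K (Suc t)) w)"
  have bounded: "\<bar>pmf (coupled_law \<pi>0 K t) z * pmf (K t z) w\<bar> \<le> 1" for t z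
    by (simp add: mult_le_one pmf_le_1)
  have "(\<Sum>z\<in>UNIV. edge_occupation \<delta> \<pi>0 K z w) = inflow"
    unfolding edge_occupation_def inflow_def discounted_sum[OF \<delta>_pos \<delta>_le_1 bounded, symmetric]
    by (simp add: pmf_bind_finite)
  \<comment> \<open>shifting time by one step: occupation = \<delta> * \<pi>0 + (1 - \<delta>) * inflow\<close>
  moreover have "occupation \<delta> \<pi>0 K w - inflow = \<delta> * pmf \<pi>0 w - \<delta> * inflow"
    unfolding occupation_def inflow_def
    by (subst discounted_split[OF \<delta>_pos \<delta>_le_1, where B = 1 and k = 1]) (simp_all add: pmf_le_1 algebra_simps)
  moreover have "0 \<le> \<delta> * inflow" "\<delta> * inflow \<le> \<delta>" "0 \<le> \<delta> * pmf \<pi>0 w" "\<delta> * pmf \<pi>0 w \<le> \<delta>"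
  proof -
    have "0 \<le> inflow" "inflow \<le> 1"
      unfolding inflow_def by (rule discounted_bounds[OF \<delta>_pos \<delta>_le_1, where B = 1]; simp add: pmf_le_1)+
    then show "0 \<le> \<delta> * inflow" "\<delta> * inflow \<le> \<delta>" "0 \<le> \<delta> * pmf \<pi>0 w" "\<delta> * pmf \<pi>0 w \<le> \<delta>"
      using \<delta>_pos by (simp_all add: mult_left_le pmf_le_1)
  qed
  ultimately show ?thesis
    unfolding abs_le_iff by linarith
qed

lemma discounted_cost_eq_occupation:
  "discounted \<delta> (\<lambda>t. exp_cost C (coupled_law \<pi>0 K t)) = (\<Sum>z\<in>UNIV. occupation \<delta> \<pi>0 K z * C (fst z) (snd z))"
proof -
  define B where "B = (\<Sum>z\<in>UNIV. \<bar>C (fst z) (snd z)\<bar>)"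
  have bounded: "\<bar>pmf p z * C (fst z) (snd z)\<bar> \<le> B" for p :: "('a \<times> 'b) pmf" and z
  proof -
    have "\<bar>pmf p z * C (fst z) (snd z)\<bar> \<le> \<bar>C (fst z) (snd z)\<bar>"
      by (simp add: abs_mult mult_left_le_one_le pmf_le_1)
    also have "\<dots> \<le> B"
      unfolding B_def by (rule member_le_sum) auto
    finally show ?thesis .
  qed
  have "discounted \<delta> (\<lambda>t. exp_cost C (coupled_law \<pi>0 K t)) =
      (\<Sum>z\<in>UNIV. discounted \<delta> (\<lambda>t. pmf (coupled_law \<pi>0 K t) z * C (fst z) (snd z)))"
    unfolding exp_cost_finite
    by (rule discounted_sum[OF \<delta>_pos \<delta>_le_1 bounded])
  also have "\<dots> = (\<Sum>z\<in>UNIV. occupation \<delta> \<pi>0 K z * C (fst z) (snd z))"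
    unfolding occupation_def
    by (intro sum.cong refl discounted_mult_right[OF \<delta>_pos \<delta>_le_1, where B = 1]) (simp add: pmf_le_1)
  finally show ?thesis .
qed

end

section \<open>Flows of coupled chains\<close>

(* G z w is the mass moved from state z to state w; \<epsilon> bounds the difference between inflow and
   outflow at every state. *)
definition coupling_flow ::
  "real \<Rightarrow> ('a \<Rightarrow> 'a pmf) \<Rightarrow> 'a pmf \<Rightarrow> ('b \<Rightarrow> 'b pmf) \<Rightarrow> 'b pmf \<Rightarrow> ('a \<times> 'b \<Rightarrow> 'a \<times> 'b \<Rightarrow> real) \<Rightarrow> bool"
where
  "coupling_flow \<epsilon> mX \<nu>X mY \<nu>Y G \<longleftrightarrow>
     (\<forall>z w. 0 \<le> G z w) \<and>
     (\<forall>z a. (\<Sum>w\<in>fst -` {a}. G z w) = pmf (mX (fst z)) a * (\<Sum>w\<in>UNIV. G z w)) \<and>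
     (\<forall>z b. (\<Sum>w\<in>snd -` {b}. G z w) = pmf (mY (snd z)) b * (\<Sum>w\<in>UNIV. G z w)) \<and>
     (\<forall>a. (\<Sum>z\<in>fst -` {a}. \<Sum>w\<in>UNIV. G z w) = pmf \<nu>X a) \<and>
     (\<forall>b. (\<Sum>z\<in>snd -` {b}. \<Sum>w\<in>UNIV. G z w) = pmf \<nu>Y b) \<and>
     (\<forall>w. \<bar>(\<Sum>z\<in>UNIV. G z w) - (\<Sum>v\<in>UNIV. G w v)\<bar> \<le> \<epsilon>)"

lemma coupling_flowD:
  assumes "coupling_flow \<epsilon> mX \<nu>X mY \<nu>Y G"
  shows "0 \<le> G z w"
    and "(\<Sum>w\<in>fst -` {a}. G z w) = pmf (mX (fst z)) a * (\<Sum>w\<in>UNIV. G z w)"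
    and "(\<Sum>w\<in>snd -` {b}. G z w) = pmf (mY (snd z)) b * (\<Sum>w\<in>UNIV. G z w)"
    and "(\<Sum>z\<in>fst -` {a}. \<Sum>w\<in>UNIV. G z w) = pmf \<nu>X a"
    and "(\<Sum>z\<in>snd -` {b}. \<Sum>w\<in>UNIV. G z w) = pmf \<nu>Y b"
    and "\<bar>(\<Sum>z\<in>UNIV. G z w) - (\<Sum>v\<in>UNIV. G w v)\<bar> \<le> \<epsilon>"
  using assms unfolding coupling_flow_def by blast+

lemma edge_occupation_coupling_flow:
  fixes \<pi>0 :: "('x::finite \<times> 'y::finite) pmf"
  assumes "stationary mX \<nu>X" and "stationary mY \<nu>Y"
    and coupling: "(\<pi>0, K) \<in> markov_couplings mX \<nu>X mY \<nu>Y"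
    and \<delta>: "0 < \<delta>" "\<delta> \<le> 1"
  shows "coupling_flow \<delta> mX \<nu>X mY \<nu>Y (edge_occupation \<delta> \<pi>0 K)"
proof -
  have "map_pmf fst (K t z) = mX (fst z)" "map_pmf snd (K t z) = mY (snd z)" for t z
    using markov_couplings_kernel[OF coupling] by (auto simp: couplings_def)
  moreover have "map_pmf fst (coupled_law \<pi>0 K t) = \<nu>X" "map_pmf snd (coupled_law \<pi>0 K t) = \<nu>Y" for t
    using coupled_law_couplings[OF assms(1-3)] by (auto simp: couplings_def)
  ultimately show ?thesis
    unfolding coupling_flow_def sum_edge_occupation_UNIV[OF \<delta>]
    by (simp add: edge_occupation_nonneg[OF \<delta>] sum_edge_occupation_vimage[OF \<delta>]
        sum_occupation_vimage[OF \<delta>] edge_occupation_inflow[OF \<delta>])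
qed

lemma coupling_flow_total:
  fixes G :: "'a::finite \<times> 'b::finite \<Rightarrow> 'a \<times> 'b \<Rightarrow> real"
  assumes "coupling_flow \<epsilon> mX \<nu>X mY \<nu>Y G"
  shows "(\<Sum>z\<in>UNIV. \<Sum>w\<in>UNIV. G z w) = 1"
proof -
  have "(\<Sum>z\<in>UNIV. \<Sum>w\<in>UNIV. G z w) = (\<Sum>a\<in>UNIV. \<Sum>z\<in>fst -` {a}. \<Sum>w\<in>UNIV. G z w)"
    using sum.group[of UNIV UNIV fst "\<lambda>z. \<Sum>w\<in>UNIV. G z w"] by (simp add: vimage_def)
  also have "\<dots> = 1"
    by (simp add: coupling_flowD(4)[OF assms] sum_pmf_eq_1)
  finally show ?thesis .
qed

lemma coupling_flow_le_1:
  fixes G :: "'a::finite \<times> 'b::finite \<Rightarrow> 'a \<times> 'b \<Rightarrow> real"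
  assumes "coupling_flow \<epsilon> mX \<nu>X mY \<nu>Y G"
  shows "G z w \<le> 1"
proof -
  note nonneg = coupling_flowD(1)[OF assms]
  have "G z w \<le> (\<Sum>w\<in>UNIV. G z w)"
    by (rule member_le_sum) (auto simp: nonneg)
  also have "\<dots> \<le> (\<Sum>z\<in>UNIV. \<Sum>w\<in>UNIV. G z w)"
    by (rule member_le_sum) (auto intro: sum_nonneg nonneg)
  also have "\<dots> = 1"
    by (rule coupling_flow_total[OF assms])
  finally show ?thesis .
qed

lemma coupling_flow_limit:
  fixes G :: "nat \<Rightarrow> 'a::finite \<times> 'b::finite \<Rightarrow> 'a \<times> 'b \<Rightarrow> real"
  assumes flow: "\<And>n. coupling_flow (\<epsilon> n) mX \<nu>X mY \<nu>Y (G n)"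
    and \<epsilon>: "\<epsilon> \<longlonglongrightarrow> 0"
    and lim: "\<And>z w. (\<lambda>n. G n z w) \<longlonglongrightarrow> G' z w"
  shows "coupling_flow 0 mX \<nu>X mY \<nu>Y G'"
proof -
  have lim_sum: "(\<lambda>n. \<Sum>w\<in>A. G n z w) \<longlonglongrightarrow> (\<Sum>w\<in>A. G' z w)" for A z
    by (intro tendsto_sum lim)
  have lim_sum2: "(\<lambda>n. \<Sum>z\<in>A. \<Sum>w\<in>B. G n z w) \<longlonglongrightarrow> (\<Sum>z\<in>A. \<Sum>w\<in>B. G' z w)" for A B
    by (intro tendsto_sum lim)
  have limit_eq: "a = b" if "\<And>n. f n = g n" "f \<longlonglongrightarrow> a" "g \<longlonglongrightarrow> b" for f g :: "nat \<Rightarrow> real" and a b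
  proof -
    from that(1) have "f = g"
      by (rule ext)
    with that(2,3) show ?thesis
      by (simp add: LIMSEQ_unique)
  qed
  have "0 \<le> G' z w" for z w
    by (intro LIMSEQ_le_const[OF lim]) (simp add: coupling_flowD(1)[OF flow])
  moreover have "(\<Sum>w\<in>fst -` {a}. G' z w) = pmf (mX (fst z)) a * (\<Sum>w\<in>UNIV. G' z w)" for z a
    by (rule limit_eq[OF coupling_flowD(2)[OF flow] lim_sum tendsto_mult_left[OF lim_sum]])
  moreover have "(\<Sum>w\<in>snd -` {b}. G' z w) = pmf (mY (snd z)) b * (\<Sum>w\<in>UNIV. G' z w)" for z b
    by (rule limit_eq[OF coupling_flowD(3)[OF flow] lim_sum tendsto_mult_left[OF lim_sum]])
  moreover have "(\<Sum>z\<in>fst -` {a}. \<Sum>w\<in>UNIV. G' z w) = pmf \<nu>X a" for a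
    by (rule limit_eq[OF coupling_flowD(4)[OF flow] lim_sum2 tendsto_const])
  moreover have "(\<Sum>z\<in>snd -` {b}. \<Sum>w\<in>UNIV. G' z w) = pmf \<nu>Y b" for b
    by (rule limit_eq[OF coupling_flowD(5)[OF flow] lim_sum2 tendsto_const])
  moreover have "\<bar>(\<Sum>z\<in>UNIV. G' z w) - (\<Sum>v\<in>UNIV. G' w v)\<bar> \<le> 0" for w
  proof (rule tendsto_le[OF trivial_limit_sequentially \<epsilon>])
    show "(\<lambda>n. \<bar>(\<Sum>z\<in>UNIV. G n z w) - (\<Sum>v\<in>UNIV. G n w v)\<bar>)
        \<longlonglongrightarrow> \<bar>(\<Sum>z\<in>UNIV. G' z w) - (\<Sum>v\<in>UNIV. G' w v)\<bar>"
      by (intro tendsto_intros lim)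
    show "\<forall>\<^sub>F n in sequentially. \<bar>(\<Sum>z\<in>UNIV. G n z w) - (\<Sum>v\<in>UNIV. G n w v)\<bar> \<le> \<epsilon> n"
      by (simp add: coupling_flowD(6)[OF flow])
  qed
  ultimately show ?thesis
    unfolding coupling_flow_def by blast
qed

lemma normalized_embed_pmf_couplings:
  fixes g :: "'a::finite \<times> 'b::finite \<Rightarrow> real"
  assumes nonneg: "\<And>w. 0 \<le> g w" and total: "(\<Sum>w\<in>UNIV. g w) = s" and pos: "0 < s"
    and fst: "\<And>a. (\<Sum>w\<in>fst -` {a}. g w) = pmf p a * s"
    and snd: "\<And>b. (\<Sum>w\<in>snd -` {b}. g w) = pmf q b * s"
  shows "pmf (embed_pmf (\<lambda>w. g w / s)) w = g w / s"
    and "embed_pmf (\<lambda>w. g w / s) \<in> couplings p q"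
proof -
  have pmf_eq: "pmf (embed_pmf (\<lambda>w. g w / s)) w = g w / s" for w
    using pos nonneg by (intro pmf_embed_pmf_finite) (simp_all add: total sum_divide_distrib[symmetric])
  then show "pmf (embed_pmf (\<lambda>w. g w / s)) w = g w / s" .
  have sum_pmf_eq: "(\<Sum>w\<in>A. pmf (embed_pmf (\<lambda>w. g w / s)) w) = (\<Sum>w\<in>A. g w) / s" for A
    by (simp add: pmf_eq sum_divide_distrib)
  show "embed_pmf (\<lambda>w. g w / s) \<in> couplings p q"
    unfolding couplings_def using pos
    by (auto intro!: pmf_eqI simp: pmf_map_finite sum_pmf_eq fst snd)
qed

lemma coupling_flow_stationary_coupling:
  fixes G :: "'a::finite \<times> 'b::finite \<Rightarrow> 'a \<times> 'b \<Rightarrow> real"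
  assumes flow: "coupling_flow 0 mX \<nu>X mY \<nu>Y G"
  obtains \<pi>0 K where "(\<pi>0, K) \<in> stationary_couplings mX \<nu>X mY \<nu>Y"
    and "\<And>z. pmf \<pi>0 z = (\<Sum>w\<in>UNIV. G z w)"
proof -
  define row where "row = (\<lambda>z. \<Sum>w\<in>UNIV. G z w)"
  note nonneg = coupling_flowD(1)[OF flow]
  have row_nonneg: "0 \<le> row z" for z
    unfolding row_def by (simp add: sum_nonneg nonneg)
  define \<pi>0 where "\<pi>0 = embed_pmf row"
  have pmf_\<pi>0: "pmf \<pi>0 = row"
    unfolding \<pi>0_def using row_nonneg coupling_flow_total[OF flow]
    by (intro ext pmf_embed_pmf_finite) (simp_all add: row_def)
  define K where "K z = (if row z = 0 then pair_pmf (mX (fst z)) (mY (snd z))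
      else embed_pmf (\<lambda>w. G z w / row z))" for z
  have normalized: "pmf (K z) w = G z w / row z" "K z \<in> couplings (mX (fst z)) (mY (snd z))"
    if "row z \<noteq> 0" for z w
    using normalized_embed_pmf_couplings[of "G z" "\<Sum>w\<in>UNIV. G z w", OF nonneg _ _ coupling_flowD(2,3)[OF flow]]
      that row_nonneg[of z] by (simp_all add: K_def row_def order_less_le)
  have "\<pi>0 \<in> couplings \<nu>X \<nu>Y"
    unfolding couplings_def
    by (auto intro!: pmf_eqI simp: pmf_map_finite pmf_\<pi>0 row_def coupling_flowD(4,5)[OF flow])
  moreover have "K (x, y) \<in> couplings (mX x) (mY y)" for x y
    using normalized(2)[of "(x, y)"]
    by (cases "row (x, y) = 0") (simp_all add: K_def couplings_def map_fst_pair_pmf map_snd_pair_pmf)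
  moreover have "bind_pmf \<pi>0 K = \<pi>0"
  proof (rule bind_pmf_eq_of_balance)
    show "pmf \<pi>0 z * pmf (K z) w = G z w" for z w
    proof (cases "row z = 0")
      case True
      have "G z w \<le> row z"
        unfolding row_def by (rule member_le_sum) (simp_all add: nonneg)
      with True nonneg[of z w] show ?thesis
        by (simp add: pmf_\<pi>0)
    qed (simp add: normalized pmf_\<pi>0)
    show "(\<Sum>z\<in>UNIV. G z w) = pmf \<pi>0 w" for w
      using coupling_flowD(6)[OF flow, of w] by (simp add: pmf_\<pi>0 row_def)
  qed
  ultimately show thesis
    by (intro that[of \<pi>0 K]) (simp_all add: stationary_couplings_def pmf_\<pi>0 row_def)
qed

section \<open>The vanishing-discount limit\<close>

lemma stationary_coupling_of_vanishing_discount: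
  fixes mX :: "'x::finite \<Rightarrow> 'x pmf" and mY :: "'y::finite \<Rightarrow> 'y pmf"
  assumes "stationary mX \<nu>X" and "stationary mY \<nu>Y"
    and \<delta>: "\<And>n. 0 < \<delta> n" "\<And>n. \<delta> n \<le> 1" "\<delta> \<longlonglongrightarrow> 0"
    and coupling: "\<And>n. (\<pi> n, K n) \<in> markov_couplings mX \<nu>X mY \<nu>Y"
    and cost: "\<And>n. discounted (\<delta> n) (\<lambda>t. exp_cost C (coupled_law (\<pi> n) (K n) t)) \<le> c"
  obtains \<pi>0 K0 where "(\<pi>0, K0) \<in> stationary_couplings mX \<nu>X mY \<nu>Y" and "exp_cost C \<pi>0 \<le> c"
proof -
  define G where "G n = edge_occupation (\<delta> n) (\<pi> n) (K n)" for n
  have flow: "coupling_flow (\<delta> n) mX \<nu>X mY \<nu>Y (G n)" for n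
    unfolding G_def by (rule edge_occupation_coupling_flow[OF assms(1,2) coupling \<delta>(1,2)])
  have bounded: "\<bar>case_prod (G n) zw\<bar> \<le> 1" for n zw
    using coupling_flowD(1)[OF flow] coupling_flow_le_1[OF flow] by (simp add: case_prod_beta)
  obtain r g where r: "strict_mono r" and lim: "\<And>zw. (\<lambda>n. case_prod (G (r n)) zw) \<longlonglongrightarrow> g zw"
    using bounded_functions_convergent_subseq[of "\<lambda>n. case_prod (G n)", OF bounded] by blast
  define G' where "G' z w = g (z, w)" for z w
  have lim': "(\<lambda>n. G (r n) z w) \<longlonglongrightarrow> G' z w" for z w
    using lim[of "(z, w)"] by (simp add: G'_def)
  have "coupling_flow 0 mX \<nu>X mY \<nu>Y G'"
  proof (rule coupling_flow_limit[of "\<lambda>n. \<delta> (r n)" _ _ _ _ "\<lambda>n. G (r n)"])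
    show "(\<lambda>n. \<delta> (r n)) \<longlonglongrightarrow> 0"
      using LIMSEQ_subseq_LIMSEQ[OF \<delta>(3) r] by (simp add: o_def)
  qed (use flow lim' in auto)
  then obtain \<pi>0 K0 where stationary: "(\<pi>0, K0) \<in> stationary_couplings mX \<nu>X mY \<nu>Y"
    and pmf_\<pi>0: "\<And>z. pmf \<pi>0 z = (\<Sum>w\<in>UNIV. G' z w)"
    by (rule coupling_flow_stationary_coupling) blast
  have "(\<lambda>n. \<Sum>z\<in>UNIV. (\<Sum>w\<in>UNIV. G (r n) z w) * C (fst z) (snd z)) \<longlonglongrightarrow> exp_cost C \<pi>0"
    unfolding exp_cost_finite pmf_\<pi>0 by (intro tendsto_intros lim')
  moreover have "(\<Sum>z\<in>UNIV. (\<Sum>w\<in>UNIV. G n z w) * C (fst z) (snd z)) \<le> c" for n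
    using cost[of n] \<delta>(1,2)[of n]
    by (simp add: G_def sum_edge_occupation_UNIV discounted_cost_eq_occupation)
  ultimately have "exp_cost C \<pi>0 \<le> c"
    by (blast intro: LIMSEQ_le_const2)
  with stationary show thesis
    by (rule that)
qed

lemma discounted_exp_cost_nonneg:
  fixes \<pi>0 :: "('a::finite \<times> 'b::finite) pmf"
  assumes "\<And>x y. 0 \<le> C x y" and "0 < \<delta>" and "\<delta> \<le> 1"
  shows "0 \<le> discounted \<delta> (\<lambda>t. exp_cost C (coupled_law \<pi>0 K t))"
  using assms by (intro discounted_bounds(1)[where B = "\<Sum>z\<in>UNIV. C (fst z) (snd z)"] exp_cost_nonneg exp_cost_le_sum)

lemma d_WL_inf_le_d_OTC:
  fixes mX :: "'x::finite \<Rightarrow> 'x pmf" and mY :: "'y::finite \<Rightarrow> 'y pmf"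
  assumes "stationary mX \<nu>X" and "stationary mY \<nu>Y" and C: "\<And>x y. 0 \<le> C x y"
    and \<delta>: "0 < \<delta>" "\<delta> \<le> 1"
  shows "d_WL_inf \<delta> mX \<nu>X mY \<nu>Y C \<le> d_OTC mX \<nu>X mY \<nu>Y C"
  unfolding d_WL_inf_eq_Inf d_OTC_eq_Inf_stationary_couplings
proof (rule cInf_superset_mono)
  show "(\<lambda>(\<pi>0, K). exp_cost C \<pi>0) ` stationary_couplings mX \<nu>X mY \<nu>Y \<noteq> {}"
    using product_stationary_coupling[OF assms(1,2)] by blast
  show "bdd_below ((\<lambda>(\<pi>0, K). discounted \<delta> (\<lambda>t. exp_cost C (coupled_law \<pi>0 K t))) `
      markov_couplings mX \<nu>X mY \<nu>Y)"
    by (rule bdd_belowI[of _ 0]) (auto intro: discounted_exp_cost_nonneg[OF C \<delta>])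
  show "(\<lambda>(\<pi>0, K). exp_cost C \<pi>0) ` stationary_couplings mX \<nu>X mY \<nu>Y \<subseteq>
      (\<lambda>(\<pi>0, K). discounted \<delta> (\<lambda>t. exp_cost C (coupled_law \<pi>0 K t))) ` markov_couplings mX \<nu>X mY \<nu>Y"
  proof clarify
    fix \<pi>0 K
    assume "(\<pi>0, K) \<in> stationary_couplings mX \<nu>X mY \<nu>Y"
    then have "(\<pi>0, \<lambda>_. K) \<in> markov_couplings mX \<nu>X mY \<nu>Y" and "bind_pmf \<pi>0 K = \<pi>0"
      by (simp_all add: stationary_couplings_def markov_couplings_def)
    then show "exp_cost C \<pi>0 \<in> (\<lambda>(\<pi>0, K). discounted \<delta> (\<lambda>t. exp_cost C (coupled_law \<pi>0 K t))) `
        markov_couplings mX \<nu>X mY \<nu>Y"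
      by (intro rev_image_eqI[of "(\<pi>0, \<lambda>_. K)"]) (simp_all add: coupled_law_const_stationary \<delta>)
  qed
qed

lemma d_OTC_le_of_vanishing_discount:
  fixes mX :: "'x::finite \<Rightarrow> 'x pmf" and mY :: "'y::finite \<Rightarrow> 'y pmf"
  assumes "stationary mX \<nu>X" and "stationary mY \<nu>Y" and C: "\<And>x y. 0 \<le> C x y"
    and \<delta>: "\<And>n. 0 < \<delta> n" "\<And>n. \<delta> n \<le> 1" "\<delta> \<longlonglongrightarrow> 0"
    and le: "\<And>n. d_WL_inf (\<delta> n) mX \<nu>X mY \<nu>Y C \<le> a"
  shows "d_OTC mX \<nu>X mY \<nu>Y C \<le> a"
proof (rule field_le_epsilon)
  fix e :: real
  assume "0 < e"
  let ?cost = "\<lambda>\<delta> (\<pi>0, K). discounted \<delta> (\<lambda>t. exp_cost C (coupled_law \<pi>0 K t))"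
  have "\<exists>\<pi>0 K. (\<pi>0, K) \<in> markov_couplings mX \<nu>X mY \<nu>Y \<and> ?cost (\<delta> n) (\<pi>0, K) < a + e" for n
  proof -
    have "?cost (\<delta> n) ` markov_couplings mX \<nu>X mY \<nu>Y \<noteq> {}"
      using product_markov_coupling by blast
    moreover have "Inf (?cost (\<delta> n) ` markov_couplings mX \<nu>X mY \<nu>Y) < a + e"
      using le[of n] \<open>0 < e\<close> by (simp add: d_WL_inf_eq_Inf)
    ultimately have "\<exists>p\<in>markov_couplings mX \<nu>X mY \<nu>Y. ?cost (\<delta> n) p < a + e"
      by (rule bex_imageD[OF cInf_lessD])
    then show ?thesis
      by auto
  qed
  then obtain \<pi> K where coupling: "\<And>n. (\<pi> n, K n) \<in> markov_couplings mX \<nu>X mY \<nu>Y"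
    and cost: "\<And>n. discounted (\<delta> n) (\<lambda>t. exp_cost C (coupled_law (\<pi> n) (K n) t)) < a + e"
    by (metis case_prod_conv)
  obtain \<pi>0 K0 where "(\<pi>0, K0) \<in> stationary_couplings mX \<nu>X mY \<nu>Y" and "exp_cost C \<pi>0 \<le> a + e"
    using stationary_coupling_of_vanishing_discount[where \<pi> = \<pi> and K = K,
        OF assms(1,2) \<delta> coupling less_imp_le[OF cost]] .
  moreover have "bdd_below ((\<lambda>(\<pi>0, K). exp_cost C \<pi>0) ` stationary_couplings mX \<nu>X mY \<nu>Y)"
    by (rule bdd_belowI[of _ 0]) (auto intro: exp_cost_nonneg C)
  ultimately show "d_OTC mX \<nu>X mY \<nu>Y C \<le> a + e"
    unfolding d_OTC_eq_Inf_stationary_couplings by (force intro: cInf_lower2)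
qed

lemma eventually_d_WL_inf_gt:
  fixes mX :: "'x::finite \<Rightarrow> 'x pmf" and mY :: "'y::finite \<Rightarrow> 'y pmf"
  assumes "stationary mX \<nu>X" and "stationary mY \<nu>Y" and "\<And>x y. 0 \<le> C x y"
    and a: "a < d_OTC mX \<nu>X mY \<nu>Y C"
  shows "\<forall>\<^sub>F \<delta> in at_right 0. a < d_WL_inf \<delta> mX \<nu>X mY \<nu>Y C"
proof (rule ccontr)
  assume "\<not> ?thesis"
  then have "\<forall>\<epsilon>>0. \<exists>\<delta>>0. \<delta> < \<epsilon> \<and> d_WL_inf \<delta> mX \<nu>X mY \<nu>Y C \<le> a"
    unfolding eventually_at_right_field not_less[symmetric] by blast
  then have "\<exists>\<delta>>0. \<delta> < inverse (Suc n) \<and> d_WL_inf \<delta> mX \<nu>X mY \<nu>Y C \<le> a" for n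
    by simp
  then obtain \<delta> where \<delta>: "\<And>n. 0 < \<delta> n" "\<And>n. \<delta> n < inverse (Suc n)"
    and le: "\<And>n. d_WL_inf (\<delta> n) mX \<nu>X mY \<nu>Y C \<le> a"
    by metis
  have "\<delta> n \<le> 1" for n
    using \<delta>(2)[of n] inverse_le_1_iff[of "real (Suc n)"] by linarith
  moreover have "\<delta> \<longlonglongrightarrow> 0"
    by (rule tendsto_sandwich[OF _ _ tendsto_const LIMSEQ_inverse_real_of_nat])
      (use \<delta> in \<open>auto intro!: always_eventually less_imp_le\<close>)
  ultimately have "d_OTC mX \<nu>X mY \<nu>Y C \<le> a"
    using d_OTC_le_of_vanishing_discount[where \<delta> = \<delta>, OF assms(1-3) \<delta>(1) _ _ le] by blast
  with a show False
    by simp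
qed

lemma d_WL_inf_tendsto_d_OTC:
  fixes mX :: "'x::finite \<Rightarrow> 'x pmf" and mY :: "'y::finite \<Rightarrow> 'y pmf"
  assumes "stationary mX \<nu>X" and "stationary mY \<nu>Y" and "\<And>x y. 0 \<le> C x y"
  shows "((\<lambda>\<delta>. d_WL_inf \<delta> mX \<nu>X mY \<nu>Y C) \<longlongrightarrow> d_OTC mX \<nu>X mY \<nu>Y C) (at_right 0)"
proof (rule order_tendstoI)
  fix a
  assume "a < d_OTC mX \<nu>X mY \<nu>Y C"
  then show "\<forall>\<^sub>F \<delta> in at_right 0. a < d_WL_inf \<delta> mX \<nu>X mY \<nu>Y C"
    by (rule eventually_d_WL_inf_gt[OF assms])
next
  fix a
  assume "d_OTC mX \<nu>X mY \<nu>Y C < a"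
  then show "\<forall>\<^sub>F \<delta> in at_right 0. d_WL_inf \<delta> mX \<nu>X mY \<nu>Y C < a"
    using d_WL_inf_le_d_OTC[where C = C, OF assms] unfolding eventually_at_right_field
    by (intro exI[of _ 1]) force
qed

lemma d_WL_k_tendsto_d_WL_inf:
  fixes mX :: "'x::finite \<Rightarrow> 'x pmf" and mY :: "'y::finite \<Rightarrow> 'y pmf"
  assumes C: "\<And>x y. 0 \<le> C x y" and \<delta>: "0 < \<delta>" "\<delta> \<le> 1"
  shows "(\<lambda>k. d_WL_k \<delta> k mX \<nu>X mY \<nu>Y C) \<longlonglongrightarrow> d_WL_inf \<delta> mX \<nu>X mY \<nu>Y C"
proof -
  define M where "M = (\<Sum>z\<in>UNIV. C (fst z) (snd z))"
  define cost where "cost p t = exp_cost C (coupled_law (fst p) (snd p) t)" for p t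
  define truncated where "truncated k p = (\<Sum>t<k. \<delta> * (1 - \<delta>) ^ t * cost p t) + (1 - \<delta>) ^ k * cost p k"
    for k p
  let ?MC = "markov_couplings mX \<nu>X mY \<nu>Y"
  have d_WL_k: "d_WL_k \<delta> k mX \<nu>X mY \<nu>Y C = Inf (truncated k ` ?MC)" for k
    unfolding d_WL_k_eq_Inf truncated_def cost_def by (simp add: case_prod_beta')
  have d_WL_inf: "d_WL_inf \<delta> mX \<nu>X mY \<nu>Y C = Inf ((\<lambda>p. discounted \<delta> (cost p)) ` ?MC)"
    unfolding d_WL_inf_eq_Inf cost_def by (simp add: case_prod_beta')
  have cost_bounds: "0 \<le> cost p t" "cost p t \<le> M" for p t
    unfolding cost_def M_def using exp_cost_nonneg exp_cost_le_sum C by blast+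
  have truncation_error: "\<bar>truncated k p - discounted \<delta> (cost p)\<bar> \<le> (1 - \<delta>) ^ k * M" for k p
    unfolding truncated_def by (rule truncated_discounted_error[OF \<delta> cost_bounds])
  have error: "truncated k p \<le> discounted \<delta> (cost p) + (1 - \<delta>) ^ k * M"
    "discounted \<delta> (cost p) \<le> truncated k p + (1 - \<delta>) ^ k * M" for k p
    using truncation_error[of k p] unfolding abs_le_iff by linarith+
  have distance: "\<bar>d_WL_k \<delta> k mX \<nu>X mY \<nu>Y C - d_WL_inf \<delta> mX \<nu>X mY \<nu>Y C\<bar> \<le> (1 - \<delta>) ^ k * M" for k
  proof -
    have nonempty: "?MC \<noteq> {}"
      using product_markov_coupling by blast
    have "bdd_below (truncated k ` ?MC)" "bdd_below ((\<lambda>p. discounted \<delta> (cost p)) ` ?MC)"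
      using cost_bounds \<delta> discounted_bounds(1)[OF \<delta> cost_bounds]
      by (auto simp: truncated_def intro!: bdd_belowI[of _ 0] add_nonneg_nonneg sum_nonneg)
    then have "Inf (truncated k ` ?MC) \<le> Inf ((\<lambda>p. discounted \<delta> (cost p)) ` ?MC) + (1 - \<delta>) ^ k * M"
      and "Inf ((\<lambda>p. discounted \<delta> (cost p)) ` ?MC) \<le> Inf (truncated k ` ?MC) + (1 - \<delta>) ^ k * M"
      by (auto intro!: cInf_image_le_plus[OF nonempty] error)
    then show ?thesis
      unfolding d_WL_k d_WL_inf abs_le_iff by linarith
  qed
  have "(\<lambda>k. d_WL_k \<delta> k mX \<nu>X mY \<nu>Y C - d_WL_inf \<delta> mX \<nu>X mY \<nu>Y C) \<longlonglongrightarrow> 0"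
  proof (rule Lim_null_comparison)
    show "\<forall>\<^sub>F k in sequentially.
        norm (d_WL_k \<delta> k mX \<nu>X mY \<nu>Y C - d_WL_inf \<delta> mX \<nu>X mY \<nu>Y C) \<le> (1 - \<delta>) ^ k * M"
      using distance by simp
    show "(\<lambda>k. (1 - \<delta>) ^ k * M) \<longlonglongrightarrow> 0"
      using \<delta> by (intro tendsto_mult_left_zero LIMSEQ_power_zero) auto
  qed
  then show ?thesis
    by (rule Lim_transform[OF tendsto_const])
qed

theorem theorem16:
  fixes mX :: "'x::finite \<Rightarrow> 'x pmf" and \<nu>X :: "'x pmf"
    and mY :: "'y::finite \<Rightarrow> 'y pmf" and \<nu>Y :: "'y pmf"
    and C :: "'x \<Rightarrow> 'y \<Rightarrow> real"
  assumes "stationary mX \<nu>X" and "stationary mY \<nu>Y"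
    and "\<And>x y. C x y \<ge> 0"
  shows "((\<lambda>\<delta>. d_WL_inf \<delta> mX \<nu>X mY \<nu>Y C) \<longlongrightarrow> d_OTC mX \<nu>X mY \<nu>Y C) (at_right 0) \<and>
    (\<forall>\<delta>\<in>{0<..1}. convergent (\<lambda>k. d_WL_k \<delta> k mX \<nu>X mY \<nu>Y C)) \<and>
    ((\<lambda>\<delta>. lim (\<lambda>k. d_WL_k \<delta> k mX \<nu>X mY \<nu>Y C)) \<longlongrightarrow> d_OTC mX \<nu>X mY \<nu>Y C) (at_right 0)"
proof (intro conjI ballI)
  show WL_inf: "((\<lambda>\<delta>. d_WL_inf \<delta> mX \<nu>X mY \<nu>Y C) \<longlongrightarrow> d_OTC mX \<nu>X mY \<nu>Y C) (at_right 0)"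
    by (rule d_WL_inf_tendsto_d_OTC[OF assms])
  have WL_k: "(\<lambda>k. d_WL_k \<delta> k mX \<nu>X mY \<nu>Y C) \<longlonglongrightarrow> d_WL_inf \<delta> mX \<nu>X mY \<nu>Y C" if "\<delta> \<in> {0<..1}" for \<delta>
    using that by (intro d_WL_k_tendsto_d_WL_inf assms(3)) auto
  then show "convergent (\<lambda>k. d_WL_k \<delta> k mX \<nu>X mY \<nu>Y C)" if "\<delta> \<in> {0<..1}" for \<delta>
    using that by (auto simp: convergent_def)
  have "\<forall>\<^sub>F \<delta> in at_right 0. d_WL_inf \<delta> mX \<nu>X mY \<nu>Y C = lim (\<lambda>k. d_WL_k \<delta> k mX \<nu>X mY \<nu>Y C)"
    unfolding eventually_at_right_field
  proof (intro exI[of _ 1] conjI allI impI)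
    fix \<delta> :: real
    assume "0 < \<delta>" and "\<delta> < 1"
    then show "d_WL_inf \<delta> mX \<nu>X mY \<nu>Y C = lim (\<lambda>k. d_WL_k \<delta> k mX \<nu>X mY \<nu>Y C)"
      by (intro limI[symmetric] WL_k) simp
  qed simp
  with WL_inf show "((\<lambda>\<delta>. lim (\<lambda>k. d_WL_k \<delta> k mX \<nu>X mY \<nu>Y C)) \<longlongrightarrow> d_OTC mX \<nu>X mY \<nu>Y C) (at_right 0)"
    by (rule tendsto_cong[THEN iffD1, rotated])
qed

end
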